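(* Let $V$ be a commutative unital quantale whose underlying lattice is a frame, with $\otimes=\wedge$ in $V$. Let $(X,a)$, $(Y,b)$ be $V$-groups with $(Y,b)$ symmetric, $\varphi\colon Y\to\mathrm{Aut}(X)$ a group action, and $c$ a $V$-category structure on $X\rtimes_\varphi Y$ such that $(X,a)\xrightarrow{\langle 1,0\rangle}(X\rtimes_\varphi Y,c)\underset{\langle 0,1\rangle}{\overset{\pi_2}{\rightleftarrows}}(Y,b)$ is a split extension in $\mathsf{VGrp}$. Then $c=a\otimes b=a\wedge b$, i.e. $c((x,y),(x',y'))=a(x,x')\wedge b(y,y')$ for all $x,x'\in X$, $y,y'\in Y$.
   Context: A commutative unital quantale $V$ is a complete lattice with a commutative associative operation $\otimes$ with unit $k$ preserving arbitrary joins in each variable; here $\otimes=\wedge$, so $k=\top$. A $V$-category $(X,a)$: $a\colon X\times X\to V$ with $k\le a(x,x)$ and $a(x,x')\otimes a(x',x'')\le a(x,x'')$; it is symmetric if $a(x,x')=a(x',x)$. A $V$-functor is a map $f$ with $a(x,x')\le b(f(x),f(x'))$. A $V$-group $(X,a,+)$ is a $V$-category with a group structure (additive, not necessarily abelian) such that $a(x_1,x_2)\otimes a(x_1',x_2')\le a(x_1+x_1',x_2+x_2')$; $V$-homomorphisms are group homomorphisms that are $V$-functors; category $\mathsf{VGrp}$ (pointed). The semidirect product $X\rtimes_\varphi Y$ is $X\times Y$ with $(x,y)+(x',y')=(x+\varphi_y(x'),y+y')$, $\varphi_y=\varphi(y)$; $\langle 1,0\rangle(x)=(x,0)$, $\langle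 0,1\rangle(y)=(0,y)$, $\pi_2(x,y)=y$. A split extension in $\mathsf{VGrp}$ means: the middle object is a $V$-group, all three maps are $V$-homomorphisms, $\pi_2\circ\langle 0,1\rangle=1_Y$, and $\langle 1,0\rangle$ is a kernel of $\pi_2$ in $\mathsf{VGrp}$. *)

theory Defs
  imports "HOL-Algebra.Bij"
begin

text \<open>V is a complete lattice with tensor = inf and unit k = top.
  Groups are HOL-Algebra groups (written multiplicatively; the paper writes them additively).\<close>

definition frame_law :: "'v::complete_lattice itself \<Rightarrow> bool" where
  "frame_law _ \<longleftrightarrow> (\<forall>(u::'v) S. inf u (Sup S) = (SUP s\<in>S. inf u s))"

definition vcat :: "'a set \<Rightarrow> ('a \<Rightarrow> 'a \<Rightarrow> 'v::complete_lattice) \<Rightarrow> bool" where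
  "vcat A a \<longleftrightarrow> (\<forall>x\<in>A. Orderings.top \<le> a x x) \<and>
     (\<forall>x\<in>A. \<forall>x'\<in>A. \<forall>x''\<in>A. inf (a x x') (a x' x'') \<le> a x x'')"

definition vsymmetric :: "'a set \<Rightarrow> ('a \<Rightarrow> 'a \<Rightarrow> 'v::complete_lattice) \<Rightarrow> bool" where
  "vsymmetric A a \<longleftrightarrow> (\<forall>x\<in>A. \<forall>x'\<in>A. a x x' = a x' x)"

definition vgroup :: "('a, 'm) monoid_scheme \<Rightarrow> ('a \<Rightarrow> 'a \<Rightarrow> 'v::complete_lattice) \<Rightarrow> bool" where
  "vgroup G a \<longleftrightarrow> group G \<and> vcat (carrier G) a \<and>
     (\<forall>x1\<in>carrier G. \<forall>x2\<in>carrier G. \<forall>x1'\<in>carrier G. \<forall>x2'\<in>carrier G.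
        inf (a x1 x2) (a x1' x2') \<le> a (x1 \<otimes>\<^bsub>G\<^esub> x1') (x2 \<otimes>\<^bsub>G\<^esub> x2'))"

definition vhom :: "('a, 'm) monoid_scheme \<Rightarrow> ('a \<Rightarrow> 'a \<Rightarrow> 'v::complete_lattice)
    \<Rightarrow> ('b, 'n) monoid_scheme \<Rightarrow> ('b \<Rightarrow> 'b \<Rightarrow> 'v) \<Rightarrow> ('a \<Rightarrow> 'b) \<Rightarrow> bool" where
  "vhom G a H b f \<longleftrightarrow> f \<in> hom G H \<and>
     (\<forall>x\<in>carrier G. \<forall>x'\<in>carrier G. a x x' \<le> b (f x) (f x'))"

definition sdprod :: "('x, 'm) monoid_scheme \<Rightarrow> ('y, 'n) monoid_scheme \<Rightarrow> ('y \<Rightarrow> 'x \<Rightarrow> 'x)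
    \<Rightarrow> ('x \<times> 'y) monoid" where
  "sdprod X Y \<phi> = \<lparr>carrier = carrier X \<times> carrier Y,
     mult = (\<lambda>(x, y) (x', y'). (x \<otimes>\<^bsub>X\<^esub> \<phi> y x', y \<otimes>\<^bsub>Y\<^esub> y')),
     one = (\<one>\<^bsub>X\<^esub>, \<one>\<^bsub>Y\<^esub>)\<rparr>"

text \<open>k : (K,e) \<rightarrow> (M,c) is a kernel of p : (M,c) \<rightarrow> (Q,d) in VGrp (pointed category; zero
  morphisms are the constant-unit maps). Test objects range over V-groups whose elements live in
  the element type of M (HOL cannot quantify over all types inside a formula).\<close>
definition is_kernel_VGrp ::
  "('k, 'm1) monoid_scheme \<Rightarrow> ('k \<Rightarrow> 'k \<Rightarrow> 'v::complete_lattice)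
   \<Rightarrow> ('a, 'm2) monoid_scheme \<Rightarrow> ('a \<Rightarrow> 'a \<Rightarrow> 'v)
   \<Rightarrow> ('q, 'm3) monoid_scheme \<Rightarrow> ('q \<Rightarrow> 'q \<Rightarrow> 'v)
   \<Rightarrow> ('k \<Rightarrow> 'a) \<Rightarrow> ('a \<Rightarrow> 'q) \<Rightarrow> bool" where
  "is_kernel_VGrp K e M c Q d k p \<longleftrightarrow>
     (\<forall>x\<in>carrier K. p (k x) = \<one>\<^bsub>Q\<^esub>) \<and>
     (\<forall>(Z :: 'a monoid) (dz :: 'a \<Rightarrow> 'a \<Rightarrow> 'v) f.
        vgroup Z dz \<and> vhom Z dz M c f \<and> (\<forall>z\<in>carrier Z. p (f z) = \<one>\<^bsub>Q\<^esub>) \<longrightarrow>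
          (\<exists>g. vhom Z dz K e g \<and> (\<forall>z\<in>carrier Z. k (g z) = f z)) \<and>
          (\<forall>g g'. vhom Z dz K e g \<and> (\<forall>z\<in>carrier Z. k (g z) = f z) \<and>
                  vhom Z dz K e g' \<and> (\<forall>z\<in>carrier Z. k (g' z) = f z)
                  \<longrightarrow> (\<forall>z\<in>carrier Z. g z = g' z)))"

end

theory Submission
  imports Defs
begin

text \<open>On X \<times> 1 the structure c restricts to a, because the kernel \<langle>1,0\<rangle> is fully faithful:
  its image, with the structure restricted from c, is itself a test object for the kernel
  property, and the induced factorisation is the inverse of \<langle>1,0\<rangle>.
  Since (x,y) = (x,1)(1,y) and multiplication is a V-functor, c \<ge> a \<and> b. Conversely
  c((x,y),(x',y')) \<le> b(y,y') \<le> b(y\<inverse>,y'\<inverse>) \<le> c((1,y\<inverse>),(1,y'\<inverse>)), the middle step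
  by symmetry of b; multiplying on the right by (1,y\<inverse>), (1,y'\<inverse>) gives
  c((x,y),(x',y')) \<le> c((x,1),(x',1)) = a(x,x').
  Only the V-group inequalities are used.\<close>

lemma vgroup_group: "vgroup G a \<Longrightarrow> group G"
  by (simp add: vgroup_def)

lemma vgroup_refl:
  assumes "vgroup G a" "x \<in> carrier G"
  shows "a x x = Orderings.top"
  using assms by (simp add: vgroup_def vcat_def top_unique)

lemma vgroup_mult_mono:
  assumes "vgroup G a" "x1 \<in> carrier G" "x2 \<in> carrier G" "y1 \<in> carrier G" "y2 \<in> carrier G"
  shows "inf (a x1 x2) (a y1 y2) \<le> a (x1 \<otimes>\<^bsub>G\<^esub> y1) (x2 \<otimes>\<^bsub>G\<^esub> y2)"
  using assms unfolding vgroup_def by blast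

lemma vgroup_le_mult_of_le:
  assumes "vgroup G a" "x1 \<in> carrier G" "x2 \<in> carrier G" "y1 \<in> carrier G" "y2 \<in> carrier G"
    and "a x1 x2 \<le> a y1 y2"
  shows "a x1 x2 \<le> a (x1 \<otimes>\<^bsub>G\<^esub> y1) (x2 \<otimes>\<^bsub>G\<^esub> y2)"
  using vgroup_mult_mono[OF assms(1-5)] assms(6) by (simp add: inf_absorb1)

lemma (in group) vgroup_le_inv_swap:
  assumes G: "vgroup G a" and x: "x \<in> carrier G" "x' \<in> carrier G"
  shows "a x x' \<le> a (inv x') (inv x)"
proof -
  have "a x x' = inf (inf (a (inv x') (inv x')) (a x x')) (a (inv x) (inv x))"
    using x by (simp add: vgroup_refl[OF G])
  also have "\<dots> \<le> a (inv x' \<otimes> x \<otimes> inv x) (inv x' \<otimes> x' \<otimes> inv x)"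
    using x vgroup_mult_mono[OF G] by (meson inf_mono order_trans inv_closed m_closed order_refl)
  also have "\<dots> = a (inv x') (inv x)"
    using x by (simp add: m_assoc)
  finally show ?thesis .
qed

lemma vgroup_symmetric_le_inv:
  assumes "vgroup G a" "vsymmetric (carrier G) a" "x \<in> carrier G" "x' \<in> carrier G"
  shows "a x x' \<le> a (inv\<^bsub>G\<^esub> x) (inv\<^bsub>G\<^esub> x')"
  using group.vgroup_le_inv_swap[OF vgroup_group[OF assms(1)] assms(1,3,4)] assms(2-4)
  by (simp add: vsymmetric_def group.inv_closed[OF vgroup_group[OF assms(1)]])

definition restrict_monoid :: "('a, 'm) monoid_scheme \<Rightarrow> 'a set \<Rightarrow> 'a monoid" where
  "restrict_monoid M H = \<lparr>carrier = H, mult = mult M, one = one M\<rparr>"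

lemma (in group) group_restrict_monoid:
  assumes H: "subgroup H G"
  shows "group (restrict_monoid G H)"
proof (rule groupI)
  fix x assume "x \<in> carrier (restrict_monoid G H)"
  then show "\<exists>y\<in>carrier (restrict_monoid G H).
      y \<otimes>\<^bsub>restrict_monoid G H\<^esub> x = \<one>\<^bsub>restrict_monoid G H\<^esub>"
    using H by (intro bexI[of _ "inv x"])
      (auto simp: restrict_monoid_def subgroup.mem_carrier subgroup.m_inv_closed)
qed (use H in \<open>auto simp: restrict_monoid_def subgroup.mem_carrier subgroup.m_closed
      subgroup.one_closed m_assoc\<close>)

lemma vgroup_restrict_monoid:
  assumes M: "vgroup M c" and H: "subgroup H M"
  shows "vgroup (restrict_monoid M H) c"
proof -
  have "H \<subseteq> carrier M" using H by (rule subgroup.subset)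
  then show ?thesis
    using M group.group_restrict_monoid[OF vgroup_group[OF M] H]
    unfolding vgroup_def vcat_def by (simp add: restrict_monoid_def) blast
qed

lemma vhom_restrict_monoid_inclusion:
  assumes "subgroup H M"
  shows "vhom (restrict_monoid M H) c M c id"
  using subgroup.subset[OF assms]
  by (auto simp: vhom_def hom_def restrict_monoid_def)

lemma is_kernel_VGrp_fully_faithful:
  fixes K :: "('k, 'm1) monoid_scheme" and M :: "('a, 'm2) monoid_scheme"
  assumes kernel: "is_kernel_VGrp K e M c Q d k p"
    and K: "group K" and M: "vgroup M c" and k: "vhom K e M c k"
    and inj: "inj_on k (carrier K)"
    and x: "x \<in> carrier K" "x' \<in> carrier K"
  shows "c (k x) (k x') = e x x'"
proof (rule antisym)
  define Z where "Z = restrict_monoid M (k ` carrier K)"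
  have "subgroup (k ` carrier K) M"
    using K vgroup_group[OF M] k
    by (intro group_hom.img_is_subgroup) (simp add: group_hom_def group_hom_axioms_def vhom_def)
  then have "vgroup Z c" "vhom Z c M c id"
    unfolding Z_def by (simp_all add: M vgroup_restrict_monoid vhom_restrict_monoid_inclusion)
  moreover have "\<forall>z\<in>carrier Z. p (id z) = \<one>\<^bsub>Q\<^esub>"
    using kernel by (auto simp: Z_def restrict_monoid_def is_kernel_VGrp_def)
  ultimately obtain g where g: "vhom Z c K e g" "\<forall>z\<in>carrier Z. k (g z) = z"
    using kernel unfolding is_kernel_VGrp_def by (metis id_apply)
  have g_k: "g (k z) = z" if "z \<in> carrier K" for z
  proof (rule inj_onD[OF inj])
    have "k z \<in> carrier Z" using that by (simp add: Z_def restrict_monoid_def)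
    then show "k (g (k z)) = k z" "g (k z) \<in> carrier K"
      using g by (auto simp: vhom_def hom_def)
  qed fact
  have "c (k x) (k x') \<le> e (g (k x)) (g (k x'))"
    using g(1) x by (simp add: vhom_def Z_def restrict_monoid_def)
  then show "c (k x) (k x') \<le> e x x'"
    using x by (simp add: g_k)
  show "e x x' \<le> c (k x) (k x')"
    using k x by (simp add: vhom_def)
qed

lemma carrier_sdprod [simp]: "carrier (sdprod X Y \<phi>) = carrier X \<times> carrier Y"
  by (simp add: sdprod_def)

lemma sdprod_mult [simp]:
  "(x, y) \<otimes>\<^bsub>sdprod X Y \<phi>\<^esub> (x', y') = (x \<otimes>\<^bsub>X\<^esub> \<phi> y x', y \<otimes>\<^bsub>Y\<^esub> y')"
  by (simp add: sdprod_def)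

lemma (in group) AutoGroup_hom_apply_one:
  assumes "\<phi> \<in> hom Y (AutoGroup G)" "y \<in> carrier Y"
  shows "\<phi> y \<one> = \<one>"
proof -
  have "\<phi> y \<in> hom G G"
    using assms by (auto simp: hom_def AutoGroup_def BijGroup_def auto_def)
  then show ?thesis by (rule hom_one) (rule is_group)+
qed

lemma sdprod_mult_embeddings:
  assumes "group X" "group Y" "\<phi> \<in> hom Y (AutoGroup X)" "x \<in> carrier X" "y \<in> carrier Y"
  shows "(x, \<one>\<^bsub>Y\<^esub>) \<otimes>\<^bsub>sdprod X Y \<phi>\<^esub> (\<one>\<^bsub>X\<^esub>, y) = (x, y)"
  using assms by (simp add: group.AutoGroup_hom_apply_one group.is_monoid)

lemma sdprod_mult_inv_embedding:
  assumes "group X" "group Y" "\<phi> \<in> hom Y (AutoGroup X)" "x \<in> carrier X" "y \<in> carrier Y"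
  shows "(x, y) \<otimes>\<^bsub>sdprod X Y \<phi>\<^esub> (\<one>\<^bsub>X\<^esub>, inv\<^bsub>Y\<^esub> y) = (x, \<one>\<^bsub>Y\<^esub>)"
  using assms by (simp add: group.AutoGroup_hom_apply_one group.is_monoid group.r_inv)

lemma sdprod_vgroup_inf_le:
  assumes "group X" "group Y" "\<phi> \<in> hom Y (AutoGroup X)" and M: "vgroup (sdprod X Y \<phi>) c"
    and x: "x \<in> carrier X" "x' \<in> carrier X" and y: "y \<in> carrier Y" "y' \<in> carrier Y"
  shows "inf (c (x, \<one>\<^bsub>Y\<^esub>) (x', \<one>\<^bsub>Y\<^esub>)) (c (\<one>\<^bsub>X\<^esub>, y) (\<one>\<^bsub>X\<^esub>, y')) \<le> c (x, y) (x', y')"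
proof -
  have "inf (c (x, \<one>\<^bsub>Y\<^esub>) (x', \<one>\<^bsub>Y\<^esub>)) (c (\<one>\<^bsub>X\<^esub>, y) (\<one>\<^bsub>X\<^esub>, y'))
      \<le> c ((x, \<one>\<^bsub>Y\<^esub>) \<otimes>\<^bsub>sdprod X Y \<phi>\<^esub> (\<one>\<^bsub>X\<^esub>, y))
          ((x', \<one>\<^bsub>Y\<^esub>) \<otimes>\<^bsub>sdprod X Y \<phi>\<^esub> (\<one>\<^bsub>X\<^esub>, y'))"
    using x y by (intro vgroup_mult_mono[OF M]) (auto simp: group.is_monoid assms(1,2))
  also have "\<dots> = c (x, y) (x', y')"
    using x y by (simp only: sdprod_mult_embeddings[OF assms(1-3)])
  finally show ?thesis .
qed

lemma sdprod_vgroup_le_fibre: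
  assumes X: "group X" and Y: "vgroup Y b" and Ysym: "vsymmetric (carrier Y) b"
    and action: "\<phi> \<in> hom Y (AutoGroup X)" and M: "vgroup (sdprod X Y \<phi>) c"
    and i2: "vhom Y b (sdprod X Y \<phi>) c (\<lambda>y. (\<one>\<^bsub>X\<^esub>, y))"
    and p2: "vhom (sdprod X Y \<phi>) c Y b snd"
    and x: "x \<in> carrier X" "x' \<in> carrier X" and y: "y \<in> carrier Y" "y' \<in> carrier Y"
  shows "c (x, y) (x', y') \<le> c (x, \<one>\<^bsub>Y\<^esub>) (x', \<one>\<^bsub>Y\<^esub>)"
proof -
  interpret X: group X by (rule X)
  interpret Y: group Y using Y by (rule vgroup_group)
  have "c (x, y) (x', y') \<le> b y y'"
    using p2 x y by (simp add: vhom_def)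
  also have "\<dots> \<le> b (inv\<^bsub>Y\<^esub> y) (inv\<^bsub>Y\<^esub> y')"
    using vgroup_symmetric_le_inv[OF Y Ysym y] .
  also have "\<dots> \<le> c (\<one>\<^bsub>X\<^esub>, inv\<^bsub>Y\<^esub> y) (\<one>\<^bsub>X\<^esub>, inv\<^bsub>Y\<^esub> y')"
    using i2 y by (simp add: vhom_def)
  finally have "c (x, y) (x', y')
      \<le> c ((x, y) \<otimes>\<^bsub>sdprod X Y \<phi>\<^esub> (\<one>\<^bsub>X\<^esub>, inv\<^bsub>Y\<^esub> y))
          ((x', y') \<otimes>\<^bsub>sdprod X Y \<phi>\<^esub> (\<one>\<^bsub>X\<^esub>, inv\<^bsub>Y\<^esub> y'))"
    by (rule vgroup_le_mult_of_le[OF M, rotated 4]) (use x y in auto)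
  also have "\<dots> = c (x, \<one>\<^bsub>Y\<^esub>) (x', \<one>\<^bsub>Y\<^esub>)"
    using x y by (simp only: sdprod_mult_inv_embedding[OF X.is_group Y.is_group action])
  finally show ?thesis .
qed

theorem proposition7p7:
  fixes X :: "('x, 'mx) monoid_scheme" and Y :: "('y, 'my) monoid_scheme"
    and a :: "'x \<Rightarrow> 'x \<Rightarrow> 'v::complete_lattice" and b :: "'y \<Rightarrow> 'y \<Rightarrow> 'v"
    and c :: "'x \<times> 'y \<Rightarrow> 'x \<times> 'y \<Rightarrow> 'v"
    and \<phi> :: "'y \<Rightarrow> 'x \<Rightarrow> 'x"
  assumes frame: "frame_law TYPE('v)"
    and X: "vgroup X a" and Y: "vgroup Y b" and Ysym: "vsymmetric (carrier Y) b"
    and action: "\<phi> \<in> hom Y (AutoGroup X)"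
    and M: "vgroup (sdprod X Y \<phi>) c"
    and i1: "vhom X a (sdprod X Y \<phi>) c (\<lambda>x. (x, \<one>\<^bsub>Y\<^esub>))"
    and i2: "vhom Y b (sdprod X Y \<phi>) c (\<lambda>y. (\<one>\<^bsub>X\<^esub>, y))"
    and p2: "vhom (sdprod X Y \<phi>) c Y b snd"
    and split: "\<forall>y\<in>carrier Y. snd (\<one>\<^bsub>X\<^esub>, y) = y"
    and kernel: "is_kernel_VGrp X a (sdprod X Y \<phi>) c Y b (\<lambda>x. (x, \<one>\<^bsub>Y\<^esub>)) snd"
  shows "\<forall>x\<in>carrier X. \<forall>x'\<in>carrier X. \<forall>y\<in>carrier Y. \<forall>y'\<in>carrier Y.
           c (x, y) (x', y') = inf (a x x') (b y y')"
proof (intro ballI antisym)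
  fix x x' y y' assume x: "x \<in> carrier X" "x' \<in> carrier X" and y: "y \<in> carrier Y" "y' \<in> carrier Y"
  have gX: "group X" and gY: "group Y" using X Y by (simp_all add: vgroup_group)
  have on_X: "c (x, \<one>\<^bsub>Y\<^esub>) (x', \<one>\<^bsub>Y\<^esub>) = a x x'"
    using is_kernel_VGrp_fully_faithful[OF kernel gX M i1 _ x] by (simp add: inj_on_def)
  have "c (x, y) (x', y') \<le> a x x'"
    using sdprod_vgroup_le_fibre[OF gX Y Ysym action M i2 p2 x y] on_X by simp
  moreover have "c (x, y) (x', y') \<le> b y y'"
    using p2 x y by (simp add: vhom_def)
  ultimately show "c (x, y) (x', y') \<le> inf (a x x') (b y y')"
    by simp
  have "inf (a x x') (b y y') \<le> inf (c (x, \<one>\<^bsub>Y\<^esub>) (x', \<one>\<^bsub>Y\<^esub>)) (c (\<one>\<^bsub>X\<^esub>, y) (\<one>\<^bsub>X\<^esub>, y'))"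
    using i1 i2 x y by (intro inf_mono) (simp_all add: vhom_def)
  also have "\<dots> \<le> c (x, y) (x', y')"
    using sdprod_vgroup_inf_le[OF gX gY action M x y] .
  finally show "inf (a x x') (b y y') \<le> c (x, y) (x', y')" .
qed

end
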